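(* Let $(X,\tau)$ be a topological quandle and let $\{X_\alpha\}_{\alpha\in\Gamma}$ be its path components. Then each $X_\alpha$, with the subspace topology and the restricted operation, is a topological subquandle of $X$; in particular $x\triangleright y\in X_\alpha$ for all $x,y\in X_\alpha$.
   Context: A quandle is a set with a binary operation $\triangleright$ such that $x\triangleright x=x$, each $\beta_y(x)=x\triangleright y$ is bijective, and $(x\triangleright y)\triangleright z=(x\triangleright z)\triangleright(y\triangleright z)$. A topological quandle is a topological space with a continuous quandle operation $\triangleright:X\times X\to X$ such that every $\beta_y$ is a homeomorphism. A topological subquandle is a subset closed under $\triangleright$ which is a topological quandle with the subspace topology and the restricted operation. *)

theory Defs
  imports "HOL-Analysis.Analysis"
begin

definition quandle_on :: "'a set \<Rightarrow> ('a \<Rightarrow> 'a \<Rightarrow> 'a) \<Rightarrow> bool" where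
  "quandle_on Q op \<longleftrightarrow>
     (\<forall>x\<in>Q. \<forall>y\<in>Q. op x y \<in> Q) \<and>
     (\<forall>x\<in>Q. op x x = x) \<and>
     (\<forall>y\<in>Q. bij_betw (\<lambda>x. op x y) Q Q) \<and>
     (\<forall>x\<in>Q. \<forall>y\<in>Q. \<forall>z\<in>Q. op (op x y) z = op (op x z) (op y z))"

definition topological_quandle :: "'a topology \<Rightarrow> ('a \<Rightarrow> 'a \<Rightarrow> 'a) \<Rightarrow> bool" where
  "topological_quandle X op \<longleftrightarrow>
     quandle_on (topspace X) op \<and>
     continuous_map (prod_topology X X) X (\<lambda>(x, y). op x y) \<and>
     (\<forall>y\<in>topspace X. homeomorphic_map X X (\<lambda>x. op x y))"

definition topological_subquandle :: "'a topology \<Rightarrow> ('a \<Rightarrow> 'a \<Rightarrow> 'a) \<Rightarrow> 'a set \<Rightarrow> bool" where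
  "topological_subquandle X op S \<longleftrightarrow>
     S \<subseteq> topspace X \<and>
     (\<forall>x\<in>S. \<forall>y\<in>S. op x y \<in> S) \<and>
     topological_quandle (subtopology X S) op"

end

theory Submission
  imports Defs
begin

text \<open>Every left translation \<open>op x\<close> is continuous and fixes \<open>x\<close> by idempotence, so it maps the
  path component of \<open>x\<close> into itself; this gives closure under the operation. Every right
  translation \<open>\<lambda>x. op x y\<close> is a homeomorphism fixing \<open>y\<close>, so it permutes the path component
  of \<open>y\<close>; restricted to that component it is therefore again a bijection and a homeomorphism.\<close>

lemma continuous_map_fixpoint_path_component_image:
  assumes f: "continuous_map X X f" and C: "C \<in> path_components_of X"
    and "p \<in> C" and "f p = p"
  shows "f ` C \<subseteq> C"
proof (rule path_components_of_maximal[OF C])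
  show "path_connectedin X (f ` C)"
    using path_connectedin_continuous_map_image[OF f path_connectedin_path_components_of[OF C]] .
  show "\<not> disjnt C (f ` C)"
    using \<open>p \<in> C\<close> \<open>f p = p\<close> by (metis disjnt_iff image_eqI)
qed

lemma homeomorphic_map_fixpoint_path_component_image:
  assumes f: "homeomorphic_map X X f" and C: "C \<in> path_components_of X"
    and "p \<in> C" and "f p = p"
  shows "f ` C = C"
proof -
  have "p \<in> topspace X"
    using C \<open>p \<in> C\<close> path_components_of_subset by blast
  moreover have "C = Collect (path_component_of X p)"
    using C \<open>p \<in> C\<close> by (auto simp: path_components_of_def path_component_of_equiv)
  ultimately show ?thesis
    using homeomorphic_map_path_component_of[OF f] \<open>f p = p\<close> by metis
qed

lemma quandle_on_subset:
  assumes Q: "quandle_on Q op" and "S \<subseteq> Q"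
    and closed: "\<And>x y. x \<in> S \<Longrightarrow> y \<in> S \<Longrightarrow> op x y \<in> S"
    and onto: "\<And>y. y \<in> S \<Longrightarrow> (\<lambda>x. op x y) ` S = S"
  shows "quandle_on S op"
  unfolding quandle_on_def
proof (intro conjI ballI)
  fix x y z assume "x \<in> S" "y \<in> S" "z \<in> S"
  then have "x \<in> Q" "y \<in> Q" "z \<in> Q"
    using \<open>S \<subseteq> Q\<close> by blast+
  then show "op x x = x" and "op (op x y) z = op (op x z) (op y z)"
    using Q unfolding quandle_on_def by blast+
  show "op x y \<in> S"
    using closed \<open>x \<in> S\<close> \<open>y \<in> S\<close> .
  have "inj_on (\<lambda>x. op x y) Q"
    using Q \<open>y \<in> Q\<close> by (simp add: quandle_on_def bij_betw_def)
  then show "bij_betw (\<lambda>x. op x y) S S"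
    using inj_on_subset[OF _ \<open>S \<subseteq> Q\<close>] onto[OF \<open>y \<in> S\<close>] by (simp add: bij_betw_def)
qed

lemma topological_subquandleI:
  assumes X: "topological_quandle X op" and S: "S \<subseteq> topspace X"
    and closed: "\<And>x y. x \<in> S \<Longrightarrow> y \<in> S \<Longrightarrow> op x y \<in> S"
    and onto: "\<And>y. y \<in> S \<Longrightarrow> (\<lambda>x. op x y) ` S = S"
  shows "topological_subquandle X op S"
proof -
  have Q: "quandle_on (topspace X) op"
    and cont: "continuous_map (prod_topology X X) X (\<lambda>(x, y). op x y)"
    and hom: "\<And>y. y \<in> topspace X \<Longrightarrow> homeomorphic_map X X (\<lambda>x. op x y)"
    using X by (auto simp: topological_quandle_def)
  have "continuous_map (subtopology (prod_topology X X) (S \<times> S)) X (\<lambda>(x, y). op x y)"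
    using cont by (rule continuous_map_from_subtopology)
  then have cont_S: "continuous_map (prod_topology (subtopology X S) (subtopology X S))
                       (subtopology X S) (\<lambda>(x, y). op x y)"
    using closed by (auto simp: subtopology_Times continuous_map_in_subtopology)
  have hom_S: "homeomorphic_map (subtopology X S) (subtopology X S) (\<lambda>x. op x y)"
    if "y \<in> S" for y
  proof (rule homeomorphic_map_subtopologies)
    show "homeomorphic_map X X (\<lambda>x. op x y)"
      using hom S that by blast
    show "(\<lambda>x. op x y) ` (topspace X \<inter> S) = topspace X \<inter> S"
      using onto[OF that] S by (simp add: Int_absorb1)
  qed
  show ?thesis
    unfolding topological_subquandle_def topological_quandle_def
    using S closed quandle_on_subset[OF Q S closed onto] cont_S hom_S
    by (simp add: Int_absorb1)
qed

lemma topological_quandle_continuous_left_translation: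
  assumes "topological_quandle X op" and "x \<in> topspace X"
  shows "continuous_map X X (op x)"
proof -
  have "continuous_map X (prod_topology X X) (\<lambda>y. (x, y))"
    using \<open>x \<in> topspace X\<close> by (intro continuous_map_pairedI) auto
  moreover have "continuous_map (prod_topology X X) X (\<lambda>(u, v). op u v)"
    using assms(1) by (simp add: topological_quandle_def)
  ultimately have "continuous_map X X ((\<lambda>(u, v). op u v) \<circ> (\<lambda>y. (x, y)))"
    by (rule continuous_map_compose)
  then show ?thesis
    by (simp add: o_def)
qed

lemma topological_quandle_path_component_closed:
  assumes X: "topological_quandle X op" and C: "C \<in> path_components_of X"
    and "x \<in> C" and "y \<in> C"
  shows "op x y \<in> C"
proof -
  have "x \<in> topspace X"
    using C \<open>x \<in> C\<close> path_components_of_subset by blast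
  then have "op x x = x"
    using X by (simp add: topological_quandle_def quandle_on_def)
  with continuous_map_fixpoint_path_component_image
         [OF topological_quandle_continuous_left_translation[OF X \<open>x \<in> topspace X\<close>] C \<open>x \<in> C\<close>]
  show ?thesis
    using \<open>y \<in> C\<close> by blast
qed

lemma topological_quandle_right_translation_path_component:
  assumes X: "topological_quandle X op" and C: "C \<in> path_components_of X" and "y \<in> C"
  shows "(\<lambda>x. op x y) ` C = C"
proof -
  have "y \<in> topspace X"
    using C \<open>y \<in> C\<close> path_components_of_subset by blast
  then have "homeomorphic_map X X (\<lambda>x. op x y)" and "op y y = y"
    using X by (simp_all add: topological_quandle_def quandle_on_def)
  then show ?thesis
    using homeomorphic_map_fixpoint_path_component_image C \<open>y \<in> C\<close> by metis
qed

theorem mainTheorem14: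
  fixes X :: "'a topology" and op :: "'a \<Rightarrow> 'a \<Rightarrow> 'a"
  assumes "topological_quandle X op"
  shows "\<forall>C \<in> path_components_of X.
           topological_subquandle X op C \<and> (\<forall>x\<in>C. \<forall>y\<in>C. op x y \<in> C)"
proof
  fix C assume C: "C \<in> path_components_of X"
  have closed: "\<And>x y. x \<in> C \<Longrightarrow> y \<in> C \<Longrightarrow> op x y \<in> C"
    using topological_quandle_path_component_closed[OF assms C] .
  have "topological_subquandle X op C"
    using topological_subquandleI[OF assms path_components_of_subset[OF C] closed]
      topological_quandle_right_translation_path_component[OF assms C] by blast
  with closed show "topological_subquandle X op C \<and> (\<forall>x\<in>C. \<forall>y\<in>C. op x y \<in> C)"
    by blast
qed

end
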